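(* Let $A\in\mathcal{M}_n(\mathbb{H})$ be an upper triangular nilpotent matrix that is cycle-free. Then $W(A)$ is a closed disk $\mathbb{D}_{\mathbb{H}}(0,r)$ centered at the origin, for some $r\ge0$.
   Context: $\mathbb{H}$ denotes the real quaternions. The numerical range of $A\in\mathcal{M}_n(\mathbb{H})$ is $W(A)=\{\mathbf{x}^*A\mathbf{x}:\mathbf{x}\in\mathbb{H}^n,\ \mathbf{x}^*\mathbf{x}=1\}$. $\mathbb{D}_{\mathbb{H}}(c,r)=\{q\in\mathbb{H}:|q-c|\le r\}$. The graph $\mathcal{G}_A$ of $A=[a_{ij}]$ is the undirected graph on $\{1,\dots,n\}$ with an edge between $i$ and $j$ (a loop if $i=j$) whenever $a_{ij}\ne0$ or $a_{ji}\ne0$; $A$ is cycle-free if $\mathcal{G}_A$ contains no cycle (loops count as cycles). *)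

theory Defs
  imports "HOL-Analysis.Analysis"
begin

datatype quat = Quat (qre: real) (qim1: real) (qim2: real) (qim3: real)

instantiation quat :: ab_group_add
begin
definition "0 = Quat 0 0 0 0"
definition "p + q = Quat (qre p + qre q) (qim1 p + qim1 q) (qim2 p + qim2 q) (qim3 p + qim3 q)"
definition "p - q = Quat (qre p - qre q) (qim1 p - qim1 q) (qim2 p - qim2 q) (qim3 p - qim3 q)"
definition "- q = Quat (- qre q) (- qim1 q) (- qim2 q) (- qim3 q)"
instance
  by standard (simp_all add: zero_quat_def plus_quat_def minus_quat_def uminus_quat_def)
end

instantiation quat :: "{one, times}"
begin
definition "1 = Quat 1 0 0 0"
definition "p * q = Quat
   (qre p * qre q - qim1 p * qim1 q - qim2 p * qim2 q - qim3 p * qim3 q)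
   (qre p * qim1 q + qim1 p * qre q + qim2 p * qim3 q - qim3 p * qim2 q)
   (qre p * qim2 q - qim1 p * qim3 q + qim2 p * qre q + qim3 p * qim1 q)
   (qre p * qim3 q + qim1 p * qim2 q - qim2 p * qim1 q + qim3 p * qre q)"
instance ..
end

definition qnorm :: "quat \<Rightarrow> real" where
  "qnorm q = sqrt ((qre q)\<^sup>2 + (qim1 q)\<^sup>2 + (qim2 q)\<^sup>2 + (qim3 q)\<^sup>2)"

definition qcnj :: "quat \<Rightarrow> quat" where
  "qcnj q = Quat (qre q) (- qim1 q) (- qim2 q) (- qim3 q)"

definition qdisk :: "quat \<Rightarrow> real \<Rightarrow> quat set" where
  "qdisk c r = {q. qnorm (q - c) \<le> r}"

definition qnumrange :: "nat \<Rightarrow> (nat \<Rightarrow> nat \<Rightarrow> quat) \<Rightarrow> quat set" where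
  "qnumrange n A = {(\<Sum>i<n. \<Sum>j<n. qcnj (x i) * A i j * x j) | x.
                     (\<Sum>i<n. qcnj (x i) * x i) = 1}"

definition qmat_mult :: "nat \<Rightarrow> (nat \<Rightarrow> nat \<Rightarrow> quat) \<Rightarrow> (nat \<Rightarrow> nat \<Rightarrow> quat) \<Rightarrow> nat \<Rightarrow> nat \<Rightarrow> quat" where
  "qmat_mult n A B = (\<lambda>i j. \<Sum>k<n. A i k * B k j)"

fun qmat_pow :: "nat \<Rightarrow> (nat \<Rightarrow> nat \<Rightarrow> quat) \<Rightarrow> nat \<Rightarrow> nat \<Rightarrow> nat \<Rightarrow> quat" where
  "qmat_pow n A 0 = (\<lambda>i j. if i = j then 1 else 0)"
| "qmat_pow n A (Suc k) = qmat_mult n (qmat_pow n A k) A"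

definition qnilpotent :: "nat \<Rightarrow> (nat \<Rightarrow> nat \<Rightarrow> quat) \<Rightarrow> bool" where
  "qnilpotent n A \<longleftrightarrow> (\<exists>k. \<forall>i<n. \<forall>j<n. qmat_pow n A k i j = 0)"

definition upper_triangular :: "nat \<Rightarrow> (nat \<Rightarrow> nat \<Rightarrow> quat) \<Rightarrow> bool" where
  "upper_triangular n A \<longleftrightarrow> (\<forall>i<n. \<forall>j<n. j < i \<longrightarrow> A i j = 0)"

definition qgraph_edge :: "nat \<Rightarrow> (nat \<Rightarrow> nat \<Rightarrow> quat) \<Rightarrow> nat \<Rightarrow> nat \<Rightarrow> bool" where
  "qgraph_edge n A i j \<longleftrightarrow> i < n \<and> j < n \<and> (A i j \<noteq> 0 \<or> A j i \<noteq> 0)"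

definition qgraph_has_cycle :: "nat \<Rightarrow> (nat \<Rightarrow> nat \<Rightarrow> quat) \<Rightarrow> bool" where
  "qgraph_has_cycle n A \<longleftrightarrow>
     (\<exists>i. qgraph_edge n A i i) \<or>
     (\<exists>vs. length vs \<ge> 3 \<and> distinct vs \<and>
        (\<forall>k < length vs. qgraph_edge n A (vs ! k) (vs ! ((k + 1) mod length vs))))"

definition cycle_free :: "nat \<Rightarrow> (nat \<Rightarrow> nat \<Rightarrow> quat) \<Rightarrow> bool" where
  "cycle_free n A \<longleftrightarrow> \<not> qgraph_has_cycle n A"

end

theory Submission
  imports Defs
begin

(*
  Write f(s) = \<Sum>i j. |a\<^sub>i\<^sub>j| s\<^sub>i s\<^sub>j. For a unit vector x the triangle inequality gives
  |x* A x| \<le> f(|x\<^sub>1|, ..., |x\<^sub>n|), so W(A) lies in the disk of radius r, the maximum of f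
  on the compact set of nonnegative unit vectors.
  Conversely, the graph of A is a forest and at most one of a\<^sub>i\<^sub>j, a\<^sub>j\<^sub>i is nonzero, so for any
  unit quaternion v one can choose unit quaternions e\<^sub>i, leaf by leaf, with
  e\<^sub>i* a\<^sub>i\<^sub>j e\<^sub>j = |a\<^sub>i\<^sub>j| v; then x\<^sub>i = s\<^sub>i e\<^sub>i gives x* A x = f(s) v. Since the diagonal vanishes, f is 0
  at a coordinate vector, and along normalised segments in the nonnegative sphere f takes
  every value in [0, r]. Hence every q = |q| v with |q| \<le> r lies in W(A).
*)

lemma quat_eqI:
  "qre p = qre q \<Longrightarrow> qim1 p = qim1 q \<Longrightarrow> qim2 p = qim2 q \<Longrightarrow> qim3 p = qim3 q \<Longrightarrow> p = q"
  by (cases p; cases q) auto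

lemmas quat_defs =
  zero_quat_def plus_quat_def minus_quat_def uminus_quat_def one_quat_def times_quat_def

instance quat :: ring_1
  by standard (auto intro!: quat_eqI simp: quat_defs algebra_simps)

instantiation quat :: real_vector
begin
definition "r *\<^sub>R q = Quat (r * qre q) (r * qim1 q) (r * qim2 q) (r * qim3 q)"
instance
  by standard (auto intro!: quat_eqI simp: scaleR_quat_def quat_defs algebra_simps)
end

instance quat :: real_algebra_1
  by standard (auto intro!: quat_eqI simp: scaleR_quat_def quat_defs algebra_simps)

lemma qcnj_mult: "qcnj (p * q) = qcnj q * qcnj p"
  by (auto intro!: quat_eqI simp: quat_defs qcnj_def algebra_simps)

lemma qcnj_qcnj [simp]: "qcnj (qcnj q) = q"
  by (simp add: qcnj_def)

lemma qcnj_scaleR: "qcnj (r *\<^sub>R q) = r *\<^sub>R qcnj q"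
  by (simp add: qcnj_def scaleR_quat_def)

lemma qcnj_mult_self: "qcnj q * q = (qnorm q)\<^sup>2 *\<^sub>R 1"
  by (auto intro!: quat_eqI simp: quat_defs qcnj_def qnorm_def scaleR_quat_def power2_eq_square)

lemma mult_qcnj_self: "q * qcnj q = (qnorm q)\<^sup>2 *\<^sub>R 1"
  by (auto intro!: quat_eqI simp: quat_defs qcnj_def qnorm_def scaleR_quat_def power2_eq_square)

lemma qnorm_mult: "qnorm (p * q) = qnorm p * qnorm q"
  unfolding qnorm_def real_sqrt_mult[symmetric]
  by (rule arg_cong[where f = sqrt]) (simp add: quat_defs power2_eq_square algebra_simps)

lemma qnorm_scaleR: "qnorm (r *\<^sub>R q) = \<bar>r\<bar> * qnorm q"
  by (simp add: qnorm_def scaleR_quat_def power_mult_distrib real_sqrt_mult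
      flip: distrib_left)

lemma qnorm_qcnj: "qnorm (qcnj q) = qnorm q"
  by (simp add: qnorm_def qcnj_def)

lemma qnorm_zero [simp]: "qnorm 0 = 0"
  by (simp add: qnorm_def zero_quat_def)

lemma qnorm_one [simp]: "qnorm 1 = 1"
  by (simp add: qnorm_def one_quat_def)

lemma qnorm_nonneg: "0 \<le> qnorm q"
  by (simp add: qnorm_def)

lemma qnorm_eq_0_iff: "qnorm q = 0 \<longleftrightarrow> q = 0"
  by (cases q) (auto simp: qnorm_def zero_quat_def add_nonneg_eq_0_iff)

lemma qnorm_triangle: "qnorm (p + q) \<le> qnorm p + qnorm q"
proof -
  have norm_pairs: "qnorm q = norm ((qre q, qim1 q), (qim2 q, qim3 q))" for q
    by (simp add: qnorm_def norm_Pair add.assoc)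
  show ?thesis
    using norm_triangle_ineq[of "((qre p, qim1 p), (qim2 p, qim3 p))" "((qre q, qim1 q), (qim2 q, qim3 q))"]
    by (simp add: norm_pairs plus_quat_def)
qed

lemma qnorm_sum: "qnorm (\<Sum>i\<in>I. f i) \<le> (\<Sum>i\<in>I. qnorm (f i))"
proof (induction I rule: infinite_finite_induct)
  case (insert x F)
  then show ?case using qnorm_triangle[of "f x" "sum f F"] by simp
qed (simp_all add: qnorm_def zero_quat_def)

lemma quat_polar: "\<exists>v. qnorm v = 1 \<and> q = qnorm q *\<^sub>R v"
proof (cases "q = 0")
  case True
  then show ?thesis by (intro exI[of _ 1]) (simp add: qnorm_eq_0_iff)
next
  case False
  then have "qnorm q > 0" using qnorm_nonneg qnorm_eq_0_iff by (metis less_eq_real_def)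
  then show ?thesis
    by (intro exI[of _ "(1 / qnorm q) *\<^sub>R q"]) (simp add: qnorm_scaleR)
qed

lemma edge_phase_exists:
  assumes w: "qnorm w = 1" and v: "qnorm v = 1" and ab: "a = 0 \<or> b = 0"
  shows "\<exists>z. qnorm z = 1 \<and> qcnj w * a * z = qnorm a *\<^sub>R v \<and> qcnj z * b * w = qnorm b *\<^sub>R v"
proof -
  have ww: "qcnj w * w = 1" using w by (simp add: qcnj_mult_self)
  consider "a \<noteq> 0" "b = 0" | "a = 0" "b \<noteq> 0" | "a = 0" "b = 0" using ab by blast
  then show ?thesis
  proof cases
    case 1
    then have pos: "qnorm a > 0" by (metis qnorm_eq_0_iff qnorm_nonneg less_eq_real_def)
    define z where "z = (1 / qnorm a) *\<^sub>R (qcnj a * w * v)"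
    have "qcnj w * a * z = (1 / qnorm a) *\<^sub>R (qcnj w * (a * qcnj a) * w * v)"
      by (simp add: z_def mult.assoc)
    also have "\<dots> = qnorm a *\<^sub>R v"
      using pos by (simp add: mult_qcnj_self mult.assoc[symmetric] ww power2_eq_square)
    finally show ?thesis
      using 1 pos w v by (intro exI[of _ z]) (simp add: z_def qnorm_scaleR qnorm_mult qnorm_qcnj qnorm_eq_0_iff)
  next
    case 2
    then have pos: "qnorm b > 0" by (metis qnorm_eq_0_iff qnorm_nonneg less_eq_real_def)
    define z where "z = (1 / qnorm b) *\<^sub>R (b * w * qcnj v)"
    have "qcnj z * b * w = (1 / qnorm b) *\<^sub>R (v * qcnj w * (qcnj b * b) * w)"
      by (simp add: z_def qcnj_scaleR qcnj_mult mult.assoc)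
    also have "\<dots> = qnorm b *\<^sub>R v"
      using pos w by (simp add: qcnj_mult_self mult.assoc ww power2_eq_square)
    finally show ?thesis
      using 2 pos w v by (intro exI[of _ z]) (simp add: z_def qnorm_scaleR qnorm_mult qnorm_qcnj qnorm_eq_0_iff)
  next
    case 3
    then show ?thesis by (intro exI[of _ 1]) (simp add: qnorm_eq_0_iff)
  qed
qed

definition is_cycle :: "('a \<Rightarrow> 'a \<Rightarrow> bool) \<Rightarrow> 'a list \<Rightarrow> bool" where
  "is_cycle E vs \<longleftrightarrow> 3 \<le> length vs \<and> distinct vs \<and>
     (\<forall>k < length vs. E (vs ! k) (vs ! ((k + 1) mod length vs)))"

lemma is_cycleI:
  assumes "3 \<le> length vs" "distinct vs" "successively E vs" "E (last vs) (hd vs)"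
  shows "is_cycle E vs"
  unfolding is_cycle_def
proof (intro conjI allI impI assms(1,2))
  fix k assume k: "k < length vs"
  show "E (vs ! k) (vs ! ((k + 1) mod length vs))"
  proof (cases "Suc k < length vs")
    case True
    then show ?thesis using assms(3) by (simp add: successively_nth)
  next
    case False
    then have "k = length vs - 1" "vs \<noteq> []" using k by auto
    then have "vs ! k = last vs" "(k + 1) mod length vs = 0" "vs ! 0 = hd vs"
      by (simp_all add: last_conv_nth hd_conv_nth)
    then show ?thesis using assms(4) by simp
  qed
qed

lemma is_cycle_mono:
  assumes "is_cycle E vs" "\<And>x y. x \<in> set vs \<Longrightarrow> y \<in> set vs \<Longrightarrow> E x y \<Longrightarrow> E' x y"
  shows "is_cycle E' vs"
  using assms unfolding is_cycle_def by (auto intro!: assms(2) nth_mem mod_less_divisor)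

lemma acyclic_path_extends:
  assumes sym: "\<And>x y. E x y \<Longrightarrow> E y x"
    and acyclic: "\<And>vs. set vs \<subseteq> V \<Longrightarrow> \<not> is_cycle E vs"
    and p: "distinct (h # p)" "set (h # p) \<subseteq> V" "successively E (h # p)"
    and uw: "u \<in> V" "w \<in> V" "E h u" "E h w" "u \<noteq> h" "w \<noteq> h" "u \<noteq> w"
  shows "\<exists>z\<in>V. z \<notin> set (h # p) \<and> E z h"
proof -
  \<comment> \<open>one of the two neighbours of h is not the vertex following h on the path\<close>
  obtain z where z: "z \<in> V" "E h z" "z \<noteq> h" "z \<notin> set (take 1 p)"
    using uw by (cases p) auto
  have "z \<notin> set (h # p)"
  proof
    assume "z \<in> set (h # p)"
    then obtain k where k: "k < length (h # p)" "(h # p) ! k = z" by (meson in_set_conv_nth)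
    let ?c = "take (Suc k) (h # p)"
    have "k \<noteq> 0" using k(2) z(3) by (cases k) auto
    moreover have "k \<noteq> 1" using k z by (cases p) auto
    ultimately have "3 \<le> length ?c" using k by simp
    moreover have "distinct ?c" using p(1) by (simp only: distinct_take)
    moreover have "successively E ?c"
      using p(3) successively_append_iff[of E ?c "drop (Suc k) (h # p)"] by simp
    moreover have "last ?c = z" using k by (simp only: take_Suc_conv_app_nth[OF k(1)] last_snoc)
    then have "E (last ?c) (hd ?c)" using z(2) sym by simp
    ultimately have "is_cycle E ?c" by (rule is_cycleI)
    moreover have "set ?c \<subseteq> V" using p(2) by (meson order_trans set_take_subset)
    ultimately show False using acyclic by blast
  qed
  then show ?thesis using z sym by blast
qed

lemma acyclic_has_leaf:
  assumes sym: "\<And>x y. E x y \<Longrightarrow> E y x"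
    and acyclic: "\<And>vs. set vs \<subseteq> V \<Longrightarrow> \<not> is_cycle E vs"
    and fin: "finite V" and ne: "V \<noteq> {}"
  shows "\<exists>l\<in>V. \<forall>u\<in>V. \<forall>w\<in>V. E l u \<longrightarrow> E l w \<longrightarrow> u \<noteq> l \<longrightarrow> w \<noteq> l \<longrightarrow> u = w"
proof (rule ccontr)
  assume no_leaf: "\<not> ?thesis"
  define path where
    "path p \<longleftrightarrow> p \<noteq> [] \<and> distinct p \<and> set p \<subseteq> V \<and> successively E p" for p
  have extend: "\<exists>z. path (z # p)" if "path p" for p
  proof -
    obtain h p' where hp: "p = h # p'" using \<open>path p\<close> by (cases p) (auto simp: path_def)
    then have "h \<in> V" using \<open>path p\<close> by (simp add: path_def)
    then obtain u w where "u \<in> V" "w \<in> V" "E h u" "E h w" "u \<noteq> h" "w \<noteq> h" "u \<noteq> w"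
      using no_leaf by blast
    then obtain z where "z \<in> V" "z \<notin> set p" "E z h"
      using acyclic_path_extends[of E V h p' u w] sym acyclic \<open>path p\<close> hp by (auto simp: path_def)
    then show ?thesis using \<open>path p\<close> hp by (auto simp: path_def)
  qed
  have "\<exists>p. path p \<and> length p = Suc m" for m
  proof (induction m)
    case 0
    from ne obtain x where "x \<in> V" by blast
    then have "path [x]" by (simp add: path_def)
    then show ?case by force
  next
    case (Suc m)
    then show ?case using extend by fastforce
  qed
  then obtain p where p: "path p" "length p = Suc (card V)" by blast
  then have "card (set p) = Suc (card V)" by (simp add: path_def distinct_card)
  moreover have "card (set p) \<le> card V" using p fin by (intro card_mono) (auto simp: path_def)
  ultimately show False by simp
qed

lemma leaf_phase_exists:
  assumes e: "\<forall>u\<in>W. qnorm (e u) = 1" and v: "qnorm v = 1"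
    and one_sided: "\<forall>u\<in>W. A u l = 0 \<or> A l u = 0"
    and leaf: "\<forall>u\<in>W. \<forall>w\<in>W. (A u l \<noteq> 0 \<or> A l u \<noteq> 0) \<longrightarrow> (A w l \<noteq> 0 \<or> A l w \<noteq> 0) \<longrightarrow> u = w"
  shows "\<exists>z. qnorm z = 1 \<and> (\<forall>u\<in>W. qcnj (e u) * A u l * z = qnorm (A u l) *\<^sub>R v \<and>
                                  qcnj z * A l u * e u = qnorm (A l u) *\<^sub>R v)"
proof (cases "\<exists>u\<in>W. A u l \<noteq> 0 \<or> A l u \<noteq> 0")
  case True
  then obtain u where u: "u \<in> W" "A u l \<noteq> 0 \<or> A l u \<noteq> 0" by blast
  obtain z where z: "qnorm z = 1" "qcnj (e u) * A u l * z = qnorm (A u l) *\<^sub>R v"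
    "qcnj z * A l u * e u = qnorm (A l u) *\<^sub>R v"
    using edge_phase_exists[OF _ v, of "e u" "A u l" "A l u"] e one_sided u(1) by blast
  have "qcnj (e w) * A w l * z = qnorm (A w l) *\<^sub>R v \<and> qcnj z * A l w * e w = qnorm (A l w) *\<^sub>R v"
    if "w \<in> W" for w
  proof (cases "w = u")
    case False
    then have "A w l = 0" "A l w = 0" using leaf u that by blast+
    then show ?thesis by simp
  qed (use z in simp)
  with z(1) show ?thesis by blast
next
  case False
  then show ?thesis by (intro exI[of _ 1]) auto
qed

lemma exists_unit_phases:
  fixes A :: "'a \<Rightarrow> 'a \<Rightarrow> quat"
  assumes "finite V"
    and "\<And>i j. i \<in> V \<Longrightarrow> j \<in> V \<Longrightarrow> A i j = 0 \<or> A j i = 0"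
    and "\<And>vs. set vs \<subseteq> V \<Longrightarrow> \<not> is_cycle (\<lambda>i j. A i j \<noteq> 0 \<or> A j i \<noteq> 0) vs"
    and v: "qnorm v = 1"
  shows "\<exists>e. (\<forall>i\<in>V. qnorm (e i) = 1) \<and>
    (\<forall>i\<in>V. \<forall>j\<in>V. qcnj (e i) * A i j * e j = qnorm (A i j) *\<^sub>R v)"
  using assms(1-3)
proof (induction V rule: finite_remove_induct)
  case empty
  then show ?case by simp
next
  case (remove V)
  note one_sided = remove.prems(1)
  let ?E = "\<lambda>i j. A i j \<noteq> 0 \<or> A j i \<noteq> 0"
  have "\<exists>l\<in>V. \<forall>u\<in>V. \<forall>w\<in>V. ?E l u \<longrightarrow> ?E l w \<longrightarrow> u \<noteq> l \<longrightarrow> w \<noteq> l \<longrightarrow> u = w"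
    by (rule acyclic_has_leaf) (use remove in blast)+
  then obtain l where l: "l \<in> V"
    and leaf: "\<forall>u\<in>V. \<forall>w\<in>V. ?E l u \<longrightarrow> ?E l w \<longrightarrow> u \<noteq> l \<longrightarrow> w \<noteq> l \<longrightarrow> u = w"
    by blast
  have "\<exists>e. (\<forall>i\<in>V - {l}. qnorm (e i) = 1) \<and>
    (\<forall>i\<in>V - {l}. \<forall>j\<in>V - {l}. qcnj (e i) * A i j * e j = qnorm (A i j) *\<^sub>R v)"
    by (rule remove.IH[OF l]) (use remove.prems in blast)+
  then obtain e where e_unit: "\<forall>i\<in>V - {l}. qnorm (e i) = 1"
    and e_eq: "\<forall>i\<in>V - {l}. \<forall>j\<in>V - {l}. qcnj (e i) * A i j * e j = qnorm (A i j) *\<^sub>R v"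
    by blast
  have "\<exists>z. qnorm z = 1 \<and> (\<forall>u\<in>V - {l}. qcnj (e u) * A u l * z = qnorm (A u l) *\<^sub>R v \<and>
                                      qcnj z * A l u * e u = qnorm (A l u) *\<^sub>R v)"
    by (rule leaf_phase_exists[OF e_unit v]) (use one_sided l leaf in blast)+
  then obtain z where z_unit: "qnorm z = 1"
    and z_eq: "\<forall>u\<in>V - {l}. qcnj (e u) * A u l * z = qnorm (A u l) *\<^sub>R v \<and>
                             qcnj z * A l u * e u = qnorm (A l u) *\<^sub>R v"
    by blast
  define e' where "e' = e(l := z)"
  have "qcnj (e' i) * A i j * e' j = qnorm (A i j) *\<^sub>R v" if "i \<in> V" "j \<in> V" for i j
  proof -
    have "A l l = 0" using one_sided l by blast
    then show ?thesis
      using that z_eq e_eq by (cases "i = l"; cases "j = l") (simp_all add: e'_def)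
  qed
  moreover have "\<forall>i\<in>V. qnorm (e' i) = 1" using e_unit z_unit by (simp add: e'_def)
  ultimately show ?case by blast
qed

definition nonneg_sphere :: "nat \<Rightarrow> (nat \<Rightarrow> real) set" where
  "nonneg_sphere n = {s. (\<forall>i<n. 0 \<le> s i) \<and> (\<Sum>i<n. (s i)\<^sup>2) = 1}"

definition quad_form :: "nat \<Rightarrow> (nat \<Rightarrow> nat \<Rightarrow> real) \<Rightarrow> (nat \<Rightarrow> real) \<Rightarrow> real" where
  "quad_form n a s = (\<Sum>i<n. \<Sum>j<n. a i j * s i * s j)"

lemma quad_form_scale: "quad_form n a (\<lambda>i. c * s i) = c\<^sup>2 * quad_form n a s"
  by (simp add: quad_form_def sum_distrib_left power2_eq_square algebra_simps)

lemma quad_form_restrict: "quad_form n a (restrict s {..<n}) = quad_form n a s"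
  by (simp add: quad_form_def)

lemma unit_vector_in_nonneg_sphere:
  "k < n \<Longrightarrow> (\<lambda>i. if i = k then 1 else 0) \<in> nonneg_sphere n"
  by (simp add: nonneg_sphere_def if_distrib[of "\<lambda>x. x\<^sup>2"] cong: if_cong)

lemma quad_form_unit_vector:
  "k < n \<Longrightarrow> quad_form n a (\<lambda>i. if i = k then 1 else 0) = a k k"
  by (simp add: quad_form_def if_distrib[of "times _"] cong: if_cong)

lemma nonneg_sphere_le_1:
  assumes "s \<in> nonneg_sphere n" "i < n"
  shows "s i \<le> 1"
proof -
  have "(s i)\<^sup>2 \<le> (\<Sum>i<n. (s i)\<^sup>2)" using assms(2) by (intro member_le_sum) auto
  then show ?thesis using assms(1) abs_square_le_1[of "s i"] by (simp add: nonneg_sphere_def)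
qed

lemma quad_form_attains_max:
  assumes "n \<ge> 1"
  shows "\<exists>s0\<in>nonneg_sphere n. \<forall>s\<in>nonneg_sphere n. quad_form n a s \<le> quad_form n a s0"
proof -
  \<comment> \<open>the product topology lives on functions that are undefined outside {..<n},
    hence the detour through restrict\<close>
  define X where "X = product_topology (\<lambda>_. euclideanreal) {..<n}"
  define K where "K = {s \<in> topspace X. (\<Sum>i<n. (s i)\<^sup>2) \<in> {1}} \<inter> PiE {..<n} (\<lambda>_. {0..1})"
  have "closedin X {s \<in> topspace X. (\<Sum>i<n. (s i)\<^sup>2) \<in> {1}}"
    by (rule closedin_continuous_map_preimage) (auto simp: X_def intro!: continuous_intros)
  moreover have "compactin X (PiE {..<n} (\<lambda>_. {0..1}))"
    by (simp add: X_def compactin_PiE)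
  ultimately have "compactin X K"
    unfolding K_def by (rule closed_Int_compactin)
  then have "compactin euclideanreal (quad_form n a ` K)"
    by (rule image_compactin) (auto simp: X_def quad_form_def[abs_def] intro!: continuous_intros)
  then have compact: "compact (quad_form n a ` K)" by simp
  have K_iff: "restrict s {..<n} \<in> K \<longleftrightarrow> s \<in> nonneg_sphere n" for s
    using nonneg_sphere_le_1[of s n] by (auto simp: K_def X_def nonneg_sphere_def PiE_iff)
  have "restrict (\<lambda>i. if i = 0 then 1 else 0) {..<n} \<in> K"
    using assms unit_vector_in_nonneg_sphere[of 0 n] by (simp add: K_iff)
  then have "quad_form n a ` K \<noteq> {}" by blast
  then obtain s0 where "s0 \<in> K" and max: "\<forall>s\<in>K. quad_form n a s \<le> quad_form n a s0"
    using compact_attains_sup[OF compact] by auto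
  moreover have "restrict s0 {..<n} = s0"
    using \<open>s0 \<in> K\<close> by (intro PiE_restrict[of _ _ "\<lambda>_. {0..1}"]) (simp add: K_def)
  ultimately show ?thesis
    by (metis K_iff quad_form_restrict)
qed

lemma quad_form_intermediate_value:
  assumes s0: "s0 \<in> nonneg_sphere n" and s1: "s1 \<in> nonneg_sphere n"
    and y: "quad_form n a s0 \<le> y" "y \<le> quad_form n a s1"
  shows "\<exists>s\<in>nonneg_sphere n. quad_form n a s = y"
proof -
  define p where "p t = (\<lambda>i. (1 - t) * s0 i + t * s1 i)" for t :: real
  define H where "H t = (\<Sum>i<n. (p t i)\<^sup>2)" for t
  have H_pos: "H t > 0" if t: "0 \<le> t" "t \<le> 1" for t
  proof -
    have "0 < (1 - t)\<^sup>2 + t\<^sup>2" by (simp add: sum_power2_gt_zero_iff)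
    also have "\<dots> = (\<Sum>i<n. ((1 - t) * s0 i)\<^sup>2 + (t * s1 i)\<^sup>2)"
      using s0 s1 by (simp add: nonneg_sphere_def power_mult_distrib sum.distrib
          flip: sum_distrib_left)
    also have "\<dots> \<le> H t"
      unfolding H_def p_def
    proof (intro sum_mono)
      fix i assume "i \<in> {..<n}"
      then have "0 \<le> 2 * ((1 - t) * s0 i) * (t * s1 i)"
        using s0 s1 t by (simp add: nonneg_sphere_def)
      then show "((1 - t) * s0 i)\<^sup>2 + (t * s1 i)\<^sup>2 \<le> ((1 - t) * s0 i + t * s1 i)\<^sup>2"
        unfolding power2_sum by linarith
    qed
    finally show ?thesis .
  qed
  define g where "g t = quad_form n a (p t) / H t" for t
  have "continuous_on {0..1} g"
    using H_pos unfolding g_def H_def p_def quad_form_def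
    by (intro continuous_intros) (auto simp: less_le)
  moreover have "g 0 = quad_form n a s0" "g 1 = quad_form n a s1"
    using s0 s1 by (simp_all add: g_def H_def p_def nonneg_sphere_def)
  ultimately obtain t where t: "0 \<le> t" "t \<le> 1" "g t = y"
    using IVT'[of g 0 y 1] y by auto
  define s where "s = (\<lambda>i. (1 / sqrt (H t)) * p t i)"
  have "(\<Sum>i<n. (s i)\<^sup>2) = H t / H t"
    using H_pos[OF t(1,2)] by (simp add: s_def H_def power_mult_distrib power_divide flip: sum_divide_distrib)
  moreover have "quad_form n a s = g t"
    using H_pos[OF t(1,2)] quad_form_scale[of n a "1 / sqrt (H t)" "p t"]
    by (simp add: s_def g_def power_divide)
  moreover have "\<forall>i<n. 0 \<le> s i"
    using s0 s1 t H_pos[OF t(1,2)] by (simp add: s_def p_def nonneg_sphere_def)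
  ultimately show ?thesis
    using H_pos[OF t(1,2)] t(3) by (auto simp: nonneg_sphere_def)
qed

lemma sum_qcnj_mult_self_eq_1_iff:
  "(\<Sum>i<n. qcnj (x i) * x i) = 1 \<longleftrightarrow> (\<Sum>i<n. (qnorm (x i))\<^sup>2) = 1"
proof -
  have "(\<Sum>i<n. qcnj (x i) * x i) = of_real (\<Sum>i<n. (qnorm (x i))\<^sup>2)"
    by (simp add: qcnj_mult_self of_real_def scaleR_sum_left)
  then show ?thesis by (metis of_real_eq_1_iff)
qed

lemma qnorm_sesquilinear_le_quad_form:
  "qnorm (\<Sum>i<n. \<Sum>j<n. qcnj (x i) * A i j * x j)
     \<le> quad_form n (\<lambda>i j. qnorm (A i j)) (\<lambda>i. qnorm (x i))"
proof -
  have "qnorm (\<Sum>i<n. \<Sum>j<n. qcnj (x i) * A i j * x j)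
          \<le> (\<Sum>i<n. \<Sum>j<n. qnorm (qcnj (x i) * A i j * x j))"
    by (rule order_trans[OF qnorm_sum sum_mono[OF qnorm_sum]])
  then show ?thesis
    by (simp add: quad_form_def qnorm_mult qnorm_qcnj mult_ac)
qed

lemma qnumrange_subset_qdisk:
  assumes "\<forall>s\<in>nonneg_sphere n. quad_form n (\<lambda>i j. qnorm (A i j)) s \<le> r"
  shows "qnumrange n A \<subseteq> qdisk 0 r"
proof
  fix q assume "q \<in> qnumrange n A"
  then obtain x where q: "q = (\<Sum>i<n. \<Sum>j<n. qcnj (x i) * A i j * x j)"
    and x: "(\<Sum>i<n. qcnj (x i) * x i) = 1"
    unfolding qnumrange_def by blast
  have "(\<lambda>i. qnorm (x i)) \<in> nonneg_sphere n"
    using x by (simp add: nonneg_sphere_def qnorm_nonneg sum_qcnj_mult_self_eq_1_iff)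
  then show "q \<in> qdisk 0 r"
    using assms qnorm_sesquilinear_le_quad_form[of x A n] by (fastforce simp: qdisk_def q)
qed

lemma scaleR_quad_form_in_qnumrange:
  assumes e: "\<forall>i<n. qnorm (e i) = 1"
    "\<forall>i<n. \<forall>j<n. qcnj (e i) * A i j * e j = qnorm (A i j) *\<^sub>R v"
    and s: "(\<Sum>i<n. (s i)\<^sup>2) = 1"
  shows "quad_form n (\<lambda>i j. qnorm (A i j)) s *\<^sub>R v \<in> qnumrange n A"
proof -
  define x where "x i = s i *\<^sub>R e i" for i
  have "(\<Sum>i<n. qcnj (x i) * x i) = 1"
    unfolding sum_qcnj_mult_self_eq_1_iff using e s by (simp add: x_def qnorm_scaleR power_mult_distrib)
  moreover have "quad_form n (\<lambda>i j. qnorm (A i j)) s *\<^sub>R v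
      = (\<Sum>i<n. \<Sum>j<n. qcnj (x i) * A i j * x j)"
    using e by (simp add: x_def qcnj_scaleR quad_form_def scaleR_sum_left mult_ac)
  ultimately show ?thesis
    unfolding qnumrange_def by blast
qed

lemma cycle_free_acyclic:
  assumes "cycle_free n A" "set vs \<subseteq> {..<n}"
  shows "\<not> is_cycle (\<lambda>i j. A i j \<noteq> 0 \<or> A j i \<noteq> 0) vs"
proof
  assume "is_cycle (\<lambda>i j. A i j \<noteq> 0 \<or> A j i \<noteq> 0) vs"
  then have "is_cycle (qgraph_edge n A) vs"
    by (rule is_cycle_mono) (use assms(2) in \<open>auto simp: qgraph_edge_def\<close>)
  then show False
    using assms(1) by (auto simp: cycle_free_def qgraph_has_cycle_def is_cycle_def)
qed

lemma cycle_free_upper_triangular_one_sided: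
  assumes "cycle_free n A" "upper_triangular n A" "i < n" "j < n"
  shows "A i j = 0 \<or> A j i = 0"
proof (cases "i = j")
  case True
  then show ?thesis
    using assms(1,3) by (auto simp: cycle_free_def qgraph_has_cycle_def qgraph_edge_def)
next
  case False
  then show ?thesis
    using assms(2-4) by (auto simp: upper_triangular_def nat_neq_iff)
qed

lemma qdisk_subset_qnumrange:
  assumes "0 < n"
    and one_sided: "\<And>i j. i < n \<Longrightarrow> j < n \<Longrightarrow> A i j = 0 \<or> A j i = 0"
    and acyclic: "\<And>vs. set vs \<subseteq> {..<n} \<Longrightarrow> \<not> is_cycle (\<lambda>i j. A i j \<noteq> 0 \<or> A j i \<noteq> 0) vs"
    and s_max: "s_max \<in> nonneg_sphere n"
  shows "qdisk 0 (quad_form n (\<lambda>i j. qnorm (A i j)) s_max) \<subseteq> qnumrange n A"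
proof
  let ?a = "\<lambda>i j. qnorm (A i j)"
  let ?e0 = "\<lambda>i. if i = 0 then 1 else 0"
  fix q assume "q \<in> qdisk 0 (quad_form n ?a s_max)"
  moreover have "quad_form n ?a ?e0 = 0"
    using assms(1) one_sided[of 0 0] by (simp add: quad_form_unit_vector qnorm_eq_0_iff)
  ultimately obtain s where s: "s \<in> nonneg_sphere n" "quad_form n ?a s = qnorm q"
    using quad_form_intermediate_value[OF unit_vector_in_nonneg_sphere[OF assms(1)] s_max,
        where a = ?a and y = "qnorm q"] qnorm_nonneg
    by (auto simp: qdisk_def)
  obtain v where v: "qnorm v = 1" "q = qnorm q *\<^sub>R v" using quat_polar by blast
  obtain e where "\<forall>i\<in>{..<n}. qnorm (e i) = 1"
    "\<forall>i\<in>{..<n}. \<forall>j\<in>{..<n}. qcnj (e i) * A i j * e j = qnorm (A i j) *\<^sub>R v"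
    using exists_unit_phases[of "{..<n}" A v] v(1) one_sided acyclic by blast
  then show "q \<in> qnumrange n A"
    using scaleR_quad_form_in_qnumrange[of n e A v s] s v(2) by (simp add: nonneg_sphere_def)
qed

theorem corollary3p7:
  fixes n :: nat and A :: "nat \<Rightarrow> nat \<Rightarrow> quat"
  assumes "n \<ge> 1"
    and "upper_triangular n A"
    and "qnilpotent n A"
    and "cycle_free n A"
  shows "\<exists>r::real. r \<ge> 0 \<and> qnumrange n A = qdisk 0 r"
proof -
  let ?a = "\<lambda>i j. qnorm (A i j)"
  note one_sided = cycle_free_upper_triangular_one_sided[OF assms(4,2)]
  note acyclic = cycle_free_acyclic[OF assms(4)]
  obtain s_max where s_max: "s_max \<in> nonneg_sphere n"
    and max: "\<forall>s\<in>nonneg_sphere n. quad_form n ?a s \<le> quad_form n ?a s_max"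
    using quad_form_attains_max[OF assms(1)] by blast
  have "quad_form n ?a (\<lambda>i. if i = 0 then 1 else 0) = 0"
    using assms(1) one_sided[of 0 0] by (simp add: quad_form_unit_vector qnorm_eq_0_iff)
  then have "0 \<le> quad_form n ?a s_max"
    using max unit_vector_in_nonneg_sphere[of 0 n] assms(1) by force
  moreover have "qnumrange n A \<subseteq> qdisk 0 (quad_form n ?a s_max)"
    using max by (rule qnumrange_subset_qdisk)
  moreover have "qdisk 0 (quad_form n ?a s_max) \<subseteq> qnumrange n A"
    using assms(1) one_sided acyclic s_max by (intro qdisk_subset_qnumrange) auto
  ultimately show ?thesis by blast
qed

end
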